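(* Let $G$ be a connected graph of order at least two. (a) For $n\ge 3$, $O_{\rm SR}(G\,\square\,K_n)=\mathcal{B}$. (b) For $n\ge 3$, $O_{\rm SR}(G\,\square\,C_n)=\mathcal{M}$ if $n$ is even and $\Delta(G_{\rm SR})=1$, and $O_{\rm SR}(G\,\square\,C_n)=\mathcal{B}$ if $n$ is odd or $\Delta(G_{\rm SR})\ge 2$. (c) For any tree $T$ that is not a path, $O_{\rm SR}(G\,\square\,T)=\mathcal{B}$.
   Context: All graphs are finite, simple and undirected; $d(x,y)$ is the shortest-path distance; $\Delta$ denotes maximum degree; $K_n,C_n$ denote complete graph and cycle on $n$ vertices. The Cartesian product $G\,\square\,H$ has vertex set $V(G)\times V(H)$, with $(u,w)$ adjacent to $(u',w')$ iff either $u=u'$ and $ww'\in E(H)$, or $w=w'$ and $uu'\in E(G)$. A set $S\subseteq V(X)$ is a strong resolving set of a connected graph $X$ if for all distinct $x,y\in V(X)$ there exists $z\in S$ such that $x$ lies on a $y$–$z$ geodesic or $y$ lies on an $x$–$z$ geodesic. A vertex $u$ is maximally distant from $v$ if $d(u,v)\ge d(w,v)$ for every neighbor $w$ of $u$; $u,v$ are mutually maximally distant (MMD) if each is maximally distant from the other. The strong resolving graph $X_{\rm SR}$ has vertex set $\{x: x\text{ is MMD with some }y\}$ and edges exactly the MMD pairs. The Maker–Breaker strong resolving game on $X$: Maker and Breaker alternately select a not-yet-chosen vertex of $X$; Maker wins if the vertices he selects contain a strong resolving set of $X$, Breaker wins otherwise. In the M-game Maker moves first, in the B-game Breaker moves first.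 $O_{\rm SR}(X)=\mathcal{M}$ if Maker has a winning strategy in both games, $\mathcal{B}$ if Breaker has a winning strategy in both, and $\mathcal{N}$ if the first player has a winning strategy in each. *)

theory Defs
  imports Main
begin

type_synonym 'a graph = "'a set \<times> ('a \<Rightarrow> 'a \<Rightarrow> bool)"

definition verts :: "'a graph \<Rightarrow> 'a set" where "verts G = fst G"
definition adj :: "'a graph \<Rightarrow> 'a \<Rightarrow> 'a \<Rightarrow> bool" where "adj G = snd G"

definition graph :: "'a graph \<Rightarrow> bool" where
  "graph G \<longleftrightarrow> finite (verts G)
     \<and> (\<forall>x y. adj G x y \<longrightarrow> x \<in> verts G \<and> y \<in> verts G)
     \<and> (\<forall>x y. adj G x y \<longrightarrow> adj G y x)
     \<and> (\<forall>x. \<not> adj G x x)"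

definition is_walk :: "'a graph \<Rightarrow> 'a list \<Rightarrow> bool" where
  "is_walk G xs \<longleftrightarrow> xs \<noteq> [] \<and> set xs \<subseteq> verts G
     \<and> (\<forall>i. Suc i < length xs \<longrightarrow> adj G (xs ! i) (xs ! Suc i))"

definition dist :: "'a graph \<Rightarrow> 'a \<Rightarrow> 'a \<Rightarrow> nat" where
  "dist G x y = (LEAST n. \<exists>xs. is_walk G xs \<and> hd xs = x \<and> last xs = y \<and> length xs = Suc n)"

definition connected :: "'a graph \<Rightarrow> bool" where
  "connected G \<longleftrightarrow> verts G \<noteq> {} \<and>
     (\<forall>x\<in>verts G. \<forall>y\<in>verts G. \<exists>xs. is_walk G xs \<and> hd xs = x \<and> last xs = y)"

definition max_degree :: "'a graph \<Rightarrow> nat" where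
  "max_degree G = Max ((\<lambda>x. card {y \<in> verts G. adj G x y}) ` verts G)"

definition cart_prod :: "'a graph \<Rightarrow> 'b graph \<Rightarrow> ('a \<times> 'b) graph" (infixr "\<box>" 80) where
  "G \<box> H = (verts G \<times> verts H,
     (\<lambda>(u, w) (u', w'). (u = u' \<and> adj H w w') \<or> (w = w' \<and> adj G u u')))"

definition complete_graph :: "nat \<Rightarrow> nat graph" ("K") where
  "K n = ({0..<n}, (\<lambda>x y. x \<noteq> y))"

definition cycle_graph :: "nat \<Rightarrow> nat graph" ("C") where
  "C n = ({0..<n}, (\<lambda>x y. (x + 1) mod n = y \<or> (y + 1) mod n = x))"

definition geodesic :: "'a graph \<Rightarrow> 'a \<Rightarrow> 'a \<Rightarrow> 'a list \<Rightarrow> bool" where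
  "geodesic G y z p \<longleftrightarrow> is_walk G p \<and> hd p = y \<and> last p = z \<and> length p = Suc (dist G y z)"

definition on_geodesic :: "'a graph \<Rightarrow> 'a \<Rightarrow> 'a \<Rightarrow> 'a \<Rightarrow> bool" where
  "on_geodesic G x y z \<longleftrightarrow> (\<exists>p. geodesic G y z p \<and> x \<in> set p)"

definition strong_resolving_set :: "'a graph \<Rightarrow> 'a set \<Rightarrow> bool" where
  "strong_resolving_set G S \<longleftrightarrow> S \<subseteq> verts G \<and>
     (\<forall>x\<in>verts G. \<forall>y\<in>verts G. x \<noteq> y \<longrightarrow>
        (\<exists>z\<in>S. on_geodesic G x y z \<or> on_geodesic G y x z))"

definition maximally_distant :: "'a graph \<Rightarrow> 'a \<Rightarrow> 'a \<Rightarrow> bool" where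
  "maximally_distant G u v \<longleftrightarrow> (\<forall>w. adj G u w \<longrightarrow> dist G w v \<le> dist G u v)"

definition MMD :: "'a graph \<Rightarrow> 'a \<Rightarrow> 'a \<Rightarrow> bool" where
  "MMD G u v \<longleftrightarrow> u \<in> verts G \<and> v \<in> verts G \<and> u \<noteq> v
     \<and> maximally_distant G u v \<and> maximally_distant G v u"

definition strong_resolving_graph :: "'a graph \<Rightarrow> 'a graph" where
  "strong_resolving_graph G = ({x \<in> verts G. \<exists>y. MMD G x y}, MMD G)"

definition has_cycle :: "'a graph \<Rightarrow> bool" where
  "has_cycle G \<longleftrightarrow> (\<exists>xs. length xs \<ge> 3 \<and> distinct xs \<and> is_walk G xs \<and> adj G (last xs) (hd xs))"

definition tree :: "'a graph \<Rightarrow> bool" where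
  "tree T \<longleftrightarrow> graph T \<and> connected T \<and> \<not> has_cycle T"

definition path_graph :: "'a graph \<Rightarrow> bool" where
  "path_graph T \<longleftrightarrow> (\<exists>f. bij_betw f {0..<card (verts T)} (verts T) \<and>
     (\<forall>i<card (verts T). \<forall>j<card (verts T). adj T (f i) (f j) \<longleftrightarrow> (i = Suc j \<or> j = Suc i)))"

text \<open>A position is (M, B): the vertices
  chosen so far by Maker and by Breaker; the boolean says whether Maker is to move. \<close>

definition free :: "'a graph \<Rightarrow> 'a set \<Rightarrow> 'a set \<Rightarrow> 'a set" where
  "free G M B = verts G - (M \<union> B)"

definition maker_goal :: "'a graph \<Rightarrow> 'a set \<Rightarrow> bool" where
  "maker_goal G M \<longleftrightarrow> (\<exists>S\<subseteq>M. strong_resolving_set G S)"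

inductive maker_wins :: "'a graph \<Rightarrow> bool \<Rightarrow> 'a set \<Rightarrow> 'a set \<Rightarrow> bool" for G where
  mw_end: "free G M B = {} \<Longrightarrow> maker_goal G M \<Longrightarrow> maker_wins G t M B"
| mw_maker: "v \<in> free G M B \<Longrightarrow> maker_wins G False (insert v M) B \<Longrightarrow> maker_wins G True M B"
| mw_breaker: "free G M B \<noteq> {} \<Longrightarrow> (\<forall>v\<in>free G M B. maker_wins G True M (insert v B))
     \<Longrightarrow> maker_wins G False M B"

inductive breaker_wins :: "'a graph \<Rightarrow> bool \<Rightarrow> 'a set \<Rightarrow> 'a set \<Rightarrow> bool" for G where
  bw_end: "free G M B = {} \<Longrightarrow> \<not> maker_goal G M \<Longrightarrow> breaker_wins G t M B"
| bw_breaker: "v \<in> free G M B \<Longrightarrow> breaker_wins G True M (insert v B) \<Longrightarrow> breaker_wins G False M B"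
| bw_maker: "free G M B \<noteq> {} \<Longrightarrow> (\<forall>v\<in>free G M B. breaker_wins G False (insert v M) B)
     \<Longrightarrow> breaker_wins G True M B"

datatype outcome = Omaker | Obreaker | Onext

text \<open>M-game: Maker starts (True); B-game: Breaker starts (False).\<close>
definition O_SR :: "'a graph \<Rightarrow> outcome" where
  "O_SR X = (if maker_wins X True {} {} \<and> maker_wins X False {} {} then Omaker
     else if breaker_wins X True {} {} \<and> breaker_wins X False {} {} then Obreaker
     else if maker_wins X True {} {} \<and> breaker_wins X False {} {} then Onext
     else undefined)"

end

theory Submission
  imports Defs
begin

text \<open>A set of vertices is strongly resolving exactly when it contains an end of every pair of
  mutually maximally distant (MMD) vertices: such a pair can only be resolved by one of its own
  ends, and any two vertices x, y are resolved by both ends of an MMD pair obtained by extending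
  a geodesic through x and y as far as possible at both ends. So Maker must claim a vertex cover
  of the strong resolving graph. If that graph has a vertex a with two free neighbours b and c,
  Breaker claims a and then whichever of b, c Maker leaves; in the M-game he needs such a cherry
  avoiding Maker's first vertex. If the strong resolving graph is a matching, Maker answers each
  Breaker move with its partner. In a Cartesian product two vertices are MMD iff both coordinates
  are, so the product inherits cherries from an MMD pair of G and a cherry of K n, of an odd
  cycle, or of the leaves of a tree that is not a path; for an even cycle the MMD pairs are the
  antipodal pairs, a perfect matching, so the strong resolving graph of the product is a matching
  iff that of G is.\<close>

section \<open>Walks and distances\<close>

lemma is_walk_Cons_Cons:
  "is_walk G (x # y # ys) \<longleftrightarrow> x \<in> verts G \<and> adj G x y \<and> is_walk G (y # ys)"
proof -
  have "(\<forall>i. Suc i < length (x # y # ys) \<longrightarrow> adj G ((x # y # ys) ! i) ((x # y # ys) ! Suc i))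
    \<longleftrightarrow> adj G x y \<and> (\<forall>i. Suc i < length (y # ys) \<longrightarrow> adj G ((y # ys) ! i) ((y # ys) ! Suc i))"
    by (auto simp: less_Suc_eq_0_disj)
  then show ?thesis by (auto simp: is_walk_def)
qed

lemma is_walk_singleton [simp]: "is_walk G [x] \<longleftrightarrow> x \<in> verts G"
  by (simp add: is_walk_def)

lemma is_walk_Cons:
  "is_walk G (x # xs) \<longleftrightarrow> x \<in> verts G \<and> (xs = [] \<or> adj G x (hd xs) \<and> is_walk G xs)"
  by (cases xs) (auto simp: is_walk_Cons_Cons)

lemma is_walk_append:
  "is_walk G xs \<Longrightarrow> is_walk G ys \<Longrightarrow> adj G (last xs) (hd ys) \<Longrightarrow> is_walk G (xs @ ys)"
proof (induction xs)
  case Nil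
  then show ?case by simp
next
  case (Cons x xs)
  then show ?case
    by (cases "xs = []") (auto simp: is_walk_Cons dest: is_walk_def[THEN iffD1])
qed

lemma is_walk_take: "is_walk G xs \<Longrightarrow> 0 < k \<Longrightarrow> is_walk G (take k xs)"
  unfolding is_walk_def using set_take_subset[of k xs] by auto

lemma is_walk_drop: "is_walk G xs \<Longrightarrow> k < length xs \<Longrightarrow> is_walk G (drop k xs)"
  unfolding is_walk_def using set_drop_subset[of k xs] by auto

lemma dist_le_walk_length:
  "is_walk G xs \<Longrightarrow> dist G (hd xs) (last xs) \<le> length xs - 1"
  unfolding dist_def by (rule Least_le) (auto simp: is_walk_def)

definition distance_function :: "'a graph \<Rightarrow> ('a \<Rightarrow> 'a \<Rightarrow> nat) \<Rightarrow> bool" where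
  "distance_function G f \<longleftrightarrow> (\<forall>y\<in>verts G. f y y = 0)
    \<and> (\<forall>x\<in>verts G. \<forall>y\<in>verts G. x \<noteq> y \<longrightarrow> (\<exists>x'\<in>verts G. adj G x x' \<and> f x y = Suc (f x' y)))
    \<and> (\<forall>x\<in>verts G. \<forall>x'\<in>verts G. \<forall>y\<in>verts G. adj G x x' \<longrightarrow> f x y \<le> Suc (f x' y))"

lemma distance_function_self:
  "distance_function G f \<Longrightarrow> y \<in> verts G \<Longrightarrow> f y y = 0"
  by (simp add: distance_function_def)

lemma distance_function_step:
  "distance_function G f \<Longrightarrow> x \<in> verts G \<Longrightarrow> y \<in> verts G \<Longrightarrow> x \<noteq> y \<Longrightarrow>
    \<exists>x'\<in>verts G. adj G x x' \<and> f x y = Suc (f x' y)"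
  unfolding distance_function_def by blast

lemma distance_function_adj:
  "distance_function G f \<Longrightarrow> x \<in> verts G \<Longrightarrow> x' \<in> verts G \<Longrightarrow> y \<in> verts G \<Longrightarrow> adj G x x' \<Longrightarrow>
    f x y \<le> Suc (f x' y)"
  unfolding distance_function_def by blast

lemma walk_of_distance_function:
  assumes f: "distance_function G f" and "x \<in> verts G" "y \<in> verts G"
  shows "\<exists>xs. is_walk G xs \<and> hd xs = x \<and> last xs = y \<and> length xs = Suc (f x y)"
  using assms(2)
proof (induction "f x y" arbitrary: x)
  case 0
  then have "x = y" using distance_function_step[OF f _ assms(3)] by fastforce
  then show ?case using 0 by (intro exI[of _ "[x]"]) (simp add: is_walk_def)
next
  case (Suc n)
  then have "x \<noteq> y" using distance_function_self[OF f assms(3)] by auto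
  then obtain x' where x': "x' \<in> verts G" "adj G x x'" "f x y = Suc (f x' y)"
    using distance_function_step[OF f Suc.prems assms(3)] by blast
  then obtain xs where xs: "is_walk G xs" "hd xs = x'" "last xs = y" "length xs = Suc (f x' y)"
    using Suc by auto
  then have "xs \<noteq> []" by (auto simp: is_walk_def)
  then show ?case using xs x' Suc.prems
    by (intro exI[of _ "x # xs"]) (auto simp: is_walk_Cons)
qed

lemma distance_function_le_walk_length:
  assumes f: "distance_function G f"
  shows "is_walk G xs \<Longrightarrow> f (hd xs) (last xs) \<le> length xs - 1"
proof (induction xs)
  case Nil
  then show ?case by (simp add: is_walk_def)
next
  case (Cons x xs)
  show ?case
  proof (cases "xs = []")
    case True
    then show ?thesis using Cons distance_function_self[OF f, of x] by (simp add: is_walk_def)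
  next
    case False
    then have w: "is_walk G xs" "adj G x (hd xs)" "x \<in> verts G"
      using Cons.prems by (auto simp: is_walk_Cons)
    have "hd xs \<in> verts G" "last xs \<in> verts G" using w(1) False by (auto simp: is_walk_def)
    then have "f x (last xs) \<le> Suc (f (hd xs) (last xs))"
      using distance_function_adj[OF f w(3)] w(2) by blast
    then show ?thesis using Cons.IH[OF w(1)] False by (cases xs) auto
  qed
qed

lemma dist_eq_distance_function:
  assumes f: "distance_function G f" and "x \<in> verts G" "y \<in> verts G"
  shows "dist G x y = f x y"
  unfolding dist_def
proof (rule Least_equality)
  show "\<exists>xs. is_walk G xs \<and> hd xs = x \<and> last xs = y \<and> length xs = Suc (f x y)"
    using walk_of_distance_function[OF assms] .
next
  fix n assume "\<exists>xs. is_walk G xs \<and> hd xs = x \<and> last xs = y \<and> length xs = Suc n"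
  then show "f x y \<le> n" using distance_function_le_walk_length[OF f] by fastforce
qed

lemma connected_if_distance_function:
  "distance_function G f \<Longrightarrow> verts G \<noteq> {} \<Longrightarrow> connected G"
  unfolding connected_def by (metis walk_of_distance_function)

lemma connected_shortest_walk:
  assumes "connected G" and "x \<in> verts G" "y \<in> verts G"
  shows "\<exists>xs. is_walk G xs \<and> hd xs = x \<and> last xs = y \<and> length xs = Suc (dist G x y)"
proof -
  obtain xs where xs: "is_walk G xs" "hd xs = x" "last xs = y"
    using assms unfolding connected_def by blast
  then have "length xs = Suc (length xs - 1)" by (cases xs) (auto simp: is_walk_def)
  then have "\<exists>n xs. is_walk G xs \<and> hd xs = x \<and> last xs = y \<and> length xs = Suc n"
    using xs by blast
  then show ?thesis unfolding dist_def by (rule LeastI_ex)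
qed

lemma connected_dist_adj_le:
  assumes "connected G" "x \<in> verts G" "x' \<in> verts G" "y \<in> verts G" "adj G x x'"
  shows "dist G x y \<le> Suc (dist G x' y)"
proof -
  obtain xs where xs: "is_walk G xs" "hd xs = x'" "last xs = y" "length xs = Suc (dist G x' y)"
    using connected_shortest_walk[OF assms(1,3,4)] by blast
  then have "xs \<noteq> []" by (auto simp: is_walk_def)
  then have "is_walk G (x # xs)" using xs assms \<open>xs \<noteq> []\<close> by (auto simp: is_walk_Cons)
  then show ?thesis using dist_le_walk_length[of G "x # xs"] xs \<open>xs \<noteq> []\<close> by auto
qed

lemma connected_distance_function:
  assumes c: "connected G"
  shows "distance_function G (dist G)"
  unfolding distance_function_def
proof (intro conjI ballI impI)
  fix y assume "y \<in> verts G"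
  then show "dist G y y = 0" using dist_le_walk_length[of G "[y]"] by simp
next
  fix x y assume xy: "x \<in> verts G" "y \<in> verts G" "x \<noteq> y"
  obtain xs where xs: "is_walk G xs" "hd xs = x" "last xs = y" "length xs = Suc (dist G x y)"
    using connected_shortest_walk[OF c xy(1,2)] by blast
  then obtain x' rest where xs_eq: "xs = x # x' # rest"
    using xy(3) by (cases xs rule: remdups_adj.cases) auto
  then have w: "adj G x x'" "is_walk G (x' # rest)" "x' \<in> verts G"
    using xs(1) by (auto simp: is_walk_Cons_Cons is_walk_def)
  have "dist G x' y \<le> length rest" using dist_le_walk_length[OF w(2)] xs(3) xs_eq by simp
  moreover have "dist G x y \<le> Suc (dist G x' y)" using connected_dist_adj_le[OF c] xy w by blast
  ultimately have "dist G x y = Suc (dist G x' y)" using xs(4) xs_eq by simp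
  then show "\<exists>x'\<in>verts G. adj G x x' \<and> dist G x y = Suc (dist G x' y)" using w by blast
next
  fix x x' y assume "x \<in> verts G" "x' \<in> verts G" "y \<in> verts G" "adj G x x'"
  then show "dist G x y \<le> Suc (dist G x' y)" using connected_dist_adj_le[OF c] by blast
qed

text \<open>Adjacency is only constrained between vertices: the adjacency relations of K n and of
  Cartesian products also relate vertices to non-vertices.\<close>

locale connected_graph =
  fixes G :: "'a graph"
  assumes finite_verts: "finite (verts G)"
    and adj_sym: "x \<in> verts G \<Longrightarrow> y \<in> verts G \<Longrightarrow> adj G x y \<Longrightarrow> adj G y x"
    and connected: "connected G"
begin

lemma verts_nonempty: "verts G \<noteq> {}"
  using connected by (simp add: connected_def)

lemma distance_function: "distance_function G (dist G)"
  using connected_distance_function[OF connected] .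

lemma dist_self [simp]: "y \<in> verts G \<Longrightarrow> dist G y y = 0"
  using distance_function_self[OF distance_function] .

lemma dist_step:
  "x \<in> verts G \<Longrightarrow> y \<in> verts G \<Longrightarrow> x \<noteq> y \<Longrightarrow> \<exists>x'\<in>verts G. adj G x x' \<and> dist G x y = Suc (dist G x' y)"
  using distance_function_step[OF distance_function] .

lemma dist_adj_le:
  "x \<in> verts G \<Longrightarrow> x' \<in> verts G \<Longrightarrow> y \<in> verts G \<Longrightarrow> adj G x x' \<Longrightarrow>
    dist G x y \<le> Suc (dist G x' y)"
  using distance_function_adj[OF distance_function] .

lemma dist_eq_0_iff: "x \<in> verts G \<Longrightarrow> y \<in> verts G \<Longrightarrow> dist G x y = 0 \<longleftrightarrow> x = y"
  using dist_step by fastforce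

lemma dist_triangle:
  "x \<in> verts G \<Longrightarrow> y \<in> verts G \<Longrightarrow> z \<in> verts G \<Longrightarrow> dist G x z \<le> dist G x y + dist G y z"
proof (induction "dist G x y" arbitrary: x)
  case 0
  then show ?case using dist_eq_0_iff by auto
next
  case (Suc n)
  then obtain x' where x': "x' \<in> verts G" "adj G x x'" "dist G x y = Suc (dist G x' y)"
    using dist_step by (metis dist_self nat.distinct(1))
  then show ?case using Suc dist_adj_le[OF Suc.prems(1) x'(1) Suc.prems(3) x'(2)] by fastforce
qed

lemma dist_adj_le_1: "x \<in> verts G \<Longrightarrow> x' \<in> verts G \<Longrightarrow> adj G x x' \<Longrightarrow> dist G x x' \<le> 1"
  using dist_adj_le[of x x' x'] by simp

lemma dist_sym: "x \<in> verts G \<Longrightarrow> y \<in> verts G \<Longrightarrow> dist G x y = dist G y x"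
proof -
  have le: "dist G y x \<le> dist G x y" if "x \<in> verts G" "y \<in> verts G" for x y
    using that
  proof (induction "dist G x y" arbitrary: x)
    case 0
    then show ?case using dist_eq_0_iff by auto
  next
    case (Suc n)
    then obtain x' where x': "x' \<in> verts G" "adj G x x'" "dist G x y = Suc (dist G x' y)"
      using dist_step by (metis dist_self nat.distinct(1))
    have "dist G y x \<le> dist G y x' + dist G x' x" using dist_triangle x' Suc.prems by blast
    moreover have "dist G x' x \<le> 1" using dist_adj_le_1 x' Suc.prems adj_sym[OF Suc.prems(1) x'(1,2)] by blast
    ultimately show ?case using x' Suc by fastforce
  qed
  show "x \<in> verts G \<Longrightarrow> y \<in> verts G \<Longrightarrow> ?thesis" using le antisym by blast
qed

lemma on_geodesic_iff:
  assumes "y \<in> verts G" "z \<in> verts G"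
  shows "on_geodesic G x y z \<longleftrightarrow> x \<in> verts G \<and> dist G y x + dist G x z = dist G y z"
proof
  assume "on_geodesic G x y z"
  then obtain p where p: "is_walk G p" "hd p = y" "last p = z" "length p = Suc (dist G y z)" "x \<in> set p"
    unfolding on_geodesic_def geodesic_def by blast
  then have x: "x \<in> verts G" by (auto simp: is_walk_def)
  obtain k where k: "k < length p" "p ! k = x" using p(5) by (auto simp: in_set_conv_nth)
  have "last (take (Suc k) p) = x" using k by (simp add: take_Suc_conv_app_nth)
  then have "dist G y x \<le> k"
    using dist_le_walk_length[OF is_walk_take[OF p(1), of "Suc k"]] k p(2) by simp
  moreover have "dist G x z \<le> length p - k - 1"
    using dist_le_walk_length[OF is_walk_drop[OF p(1) k(1)]] k p(3) by (simp add: hd_drop_conv_nth)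
  moreover have "dist G y z \<le> dist G y x + dist G x z" using dist_triangle x assms by blast
  ultimately show "x \<in> verts G \<and> dist G y x + dist G x z = dist G y z" using p(4) k x by linarith
next
  assume x: "x \<in> verts G \<and> dist G y x + dist G x z = dist G y z"
  obtain p1 where p1: "is_walk G p1" "hd p1 = y" "last p1 = x" "length p1 = Suc (dist G y x)"
    using connected_shortest_walk[OF connected] assms x by blast
  obtain p2 where p2: "is_walk G p2" "hd p2 = x" "last p2 = z" "length p2 = Suc (dist G x z)"
    using connected_shortest_walk[OF connected] assms x by blast
  then obtain r where r: "p2 = x # r" by (cases p2) (auto simp: is_walk_def)
  have "p1 \<noteq> []" using p1(1) by (auto simp: is_walk_def)
  have "geodesic G y z (p1 @ r)"
    unfolding geodesic_def
  proof (intro conjI)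
    show "is_walk G (p1 @ r)"
      using p1 p2 r by (cases "r = []") (auto intro!: is_walk_append simp: is_walk_Cons)
  qed (use p1 p2 r x \<open>p1 \<noteq> []\<close> in \<open>auto simp: last_append\<close>)
  moreover have "x \<in> set (p1 @ r)" using p1(3) \<open>p1 \<noteq> []\<close> by auto
  ultimately show "on_geodesic G x y z" unfolding on_geodesic_def by blast
qed

end

lemma graph_adj_sym: "graph G \<Longrightarrow> adj G x y \<Longrightarrow> adj G y x"
  unfolding graph_def by blast

lemma graph_adj_verts: "graph G \<Longrightarrow> adj G x y \<Longrightarrow> x \<in> verts G \<and> y \<in> verts G"
  unfolding graph_def by blast

lemma graph_adj_irrefl: "graph G \<Longrightarrow> \<not> adj G x x"
  unfolding graph_def by blast

lemma connected_graph_if_graph: "graph G \<Longrightarrow> connected G \<Longrightarrow> connected_graph G"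
  by unfold_locales (auto simp: graph_def)

section \<open>Strong resolving sets and mutually maximally distant pairs\<close>

text \<open>Unlike maximally_distant, md ignores adjacencies leaving the vertex set, where dist is a
  junk value; on graphs the two notions agree (MMD_iff_mmd).\<close>

definition md :: "'a graph \<Rightarrow> 'a \<Rightarrow> 'a \<Rightarrow> bool" where
  "md G u v \<longleftrightarrow> (\<forall>w\<in>verts G. adj G u w \<longrightarrow> dist G w v \<le> dist G u v)"

definition mmd :: "'a graph \<Rightarrow> 'a \<Rightarrow> 'a \<Rightarrow> bool" where
  "mmd G u v \<longleftrightarrow> u \<in> verts G \<and> v \<in> verts G \<and> u \<noteq> v \<and> md G u v \<and> md G v u"

lemma finite_has_maximizer:
  fixes f :: "'a \<Rightarrow> 'b::linorder"
  assumes "finite A" "a \<in> A"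
  shows "\<exists>u\<in>A. \<forall>u'\<in>A. f u' \<le> f u"
proof -
  obtain u where "u \<in> A" "f u = Max (f ` A)" using Max_in[of "f ` A"] assms by fastforce
  moreover have "f u' \<le> Max (f ` A)" if "u' \<in> A" for u'
    using assms that by (intro Max_ge) auto
  ultimately show ?thesis by metis
qed

lemma mmd_sym: "mmd G u v \<Longrightarrow> mmd G v u"
  by (auto simp: mmd_def)

lemma mmd_D:
  assumes "mmd G u v"
  shows "u \<in> verts G" "v \<in> verts G" "u \<noteq> v"
  using assms by (simp_all add: mmd_def)

context connected_graph
begin

lemma md_geodesic_end:
  assumes md: "md G a b" and V: "a \<in> verts G" "b \<in> verts G" "z \<in> verts G"
    and geo: "on_geodesic G a b z"
  shows "z = a"
proof (rule ccontr)
  assume "z \<noteq> a"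
  have e: "dist G b a + dist G a z = dist G b z" using geo on_geodesic_iff V by blast
  obtain a' where a': "a' \<in> verts G" "adj G a a'" "dist G a z = Suc (dist G a' z)"
    using dist_step V \<open>z \<noteq> a\<close> by metis
  have "dist G b z \<le> dist G b a' + dist G a' z" using dist_triangle a' V by blast
  moreover have "dist G a' b \<le> dist G a b" using md a' unfolding md_def by blast
  ultimately show False using e a' V dist_sym by fastforce
qed

lemma mmd_meets_strong_resolving_set:
  assumes m: "mmd G x y" and S: "strong_resolving_set G S"
  shows "x \<in> S \<or> y \<in> S"
proof -
  obtain z where z: "z \<in> S" "on_geodesic G x y z \<or> on_geodesic G y x z"
    using S m unfolding strong_resolving_set_def mmd_def by blast
  have "z \<in> verts G" using S z(1) unfolding strong_resolving_set_def by blast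
  then have "z = x \<or> z = y"
    using z(2) md_geodesic_end m unfolding mmd_def by blast
  then show ?thesis using z(1) by blast
qed

lemma md_if_farthest:
  assumes V: "a \<in> verts G" "b \<in> verts G" "c \<in> verts G"
    and e: "dist G b a + dist G a c = dist G b c"
    and farthest: "\<forall>c'\<in>verts G. dist G b a + dist G a c' = dist G b c' \<longrightarrow> dist G b c' \<le> dist G b c"
  shows "md G c b"
  unfolding md_def
proof (intro ballI impI)
  fix w assume wV: "w \<in> verts G" and w: "adj G c w"
  have "dist G a w \<le> dist G a c + 1" "dist G b w \<le> dist G b c + 1"
    using dist_triangle[OF V(1,3) wV] dist_triangle[OF V(2,3) wV] dist_adj_le_1[OF V(3) wV w] by linarith+
  moreover have "dist G b w \<le> dist G b a + dist G a w" using dist_triangle V wV by blast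
  ultimately have "dist G b w \<le> dist G b c"
    using farthest[rule_format, OF wV] e by linarith
  then show "dist G w b \<le> dist G c b" using dist_sym V wV by simp
qed

lemma md_if_farthest_pair:
  assumes V: "x \<in> verts G" "y \<in> verts G" "u \<in> verts G" "v \<in> verts G"
    and ue: "dist G y x + dist G x u = dist G y u"
    and farthest: "\<forall>u'\<in>verts G. dist G y x + dist G x u' = dist G y u' \<longrightarrow> dist G y u' \<le> dist G y u"
    and ve: "dist G u y + dist G y v = dist G u v"
  shows "md G u v"
  unfolding md_def
proof (intro ballI impI)
  fix w assume wV: "w \<in> verts G" and w: "adj G u w"
  show "dist G w v \<le> dist G u v"
  proof (rule ccontr)
    assume far: "\<not> dist G w v \<le> dist G u v"
    have "dist G v w \<le> dist G v y + dist G y w" using dist_triangle V wV by blast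
    moreover have "dist G y w \<le> dist G y u + 1"
      using dist_triangle[OF V(2,3) wV] dist_adj_le_1[OF V(3) wV w] by simp
    ultimately have yw: "dist G y w = dist G y u + 1" using far ve dist_sym V wV by fastforce
    have "dist G x w \<le> dist G x u + 1"
      using dist_triangle[OF V(1,3) wV] dist_adj_le_1[OF V(3) wV w] by simp
    then have "dist G y x + dist G x w = dist G y w" using yw ue dist_triangle[OF V(2,1) wV] by simp
    then show False using farthest wV yw by fastforce
  qed
qed

text \<open>Extend x, y beyond x to a vertex u farthest from y, then beyond y to a vertex v
  farthest from u.\<close>

lemma mmd_through:
  assumes xy: "x \<in> verts G" "y \<in> verts G" "x \<noteq> y"
  shows "\<exists>u v. mmd G u v \<and> on_geodesic G x y u \<and> on_geodesic G y x v"
proof -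
  define A where "A = {u \<in> verts G. dist G y x + dist G x u = dist G y u}"
  have "x \<in> A" using xy by (simp add: A_def)
  then obtain u where u: "u \<in> A" "\<forall>u'\<in>A. dist G y u' \<le> dist G y u"
    using finite_has_maximizer[of A x "dist G y"] finite_verts by (auto simp: A_def)
  have uV: "u \<in> verts G" and ue: "dist G y x + dist G x u = dist G y u" using u by (auto simp: A_def)
  have uy: "u \<noteq> y" using ue xy dist_eq_0_iff by fastforce
  define B where "B = {v \<in> verts G. dist G u y + dist G y v = dist G u v}"
  have "y \<in> B" using xy uV by (simp add: B_def)
  then obtain v where v: "v \<in> B" "\<forall>v'\<in>B. dist G u v' \<le> dist G u v"
    using finite_has_maximizer[of B y "dist G u"] finite_verts by (auto simp: B_def)
  have vV: "v \<in> verts G" and ve: "dist G u y + dist G y v = dist G u v" using v by (auto simp: B_def)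
  have xv: "dist G x y + dist G y v = dist G x v"
    using ve ue dist_sym xy uV vV dist_triangle[OF uV xy(1) vV] dist_triangle[OF xy(1,2) vV] by fastforce
  have "md G u y" using md_if_farthest[OF xy(1,2) uV ue] u(2) by (auto simp: A_def)
  moreover have "md G v u" using md_if_farthest[OF xy(2) uV vV ve] v(2) by (auto simp: B_def)
  moreover have "md G u v" using md_if_farthest_pair[OF xy(1,2) uV vV ue _ ve] u(2) by (auto simp: A_def)
  moreover have "u \<noteq> v" using ve uy xy uV dist_eq_0_iff by fastforce
  ultimately have "mmd G u v" using uV vV unfolding mmd_def by blast
  moreover have "on_geodesic G x y u" "on_geodesic G y x v"
    using on_geodesic_iff xy uV vV ue xv by auto
  ultimately show ?thesis by blast
qed

lemma strong_resolving_set_iff_mmd_cover: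
  "strong_resolving_set G S \<longleftrightarrow> S \<subseteq> verts G \<and> (\<forall>u v. mmd G u v \<longrightarrow> u \<in> S \<or> v \<in> S)"
proof
  assume "strong_resolving_set G S"
  then show "S \<subseteq> verts G \<and> (\<forall>u v. mmd G u v \<longrightarrow> u \<in> S \<or> v \<in> S)"
    using mmd_meets_strong_resolving_set by (auto simp: strong_resolving_set_def)
next
  assume cover: "S \<subseteq> verts G \<and> (\<forall>u v. mmd G u v \<longrightarrow> u \<in> S \<or> v \<in> S)"
  show "strong_resolving_set G S"
    unfolding strong_resolving_set_def
  proof (intro conjI ballI impI)
    fix x y assume "x \<in> verts G" "y \<in> verts G" "x \<noteq> y"
    then obtain u v where "mmd G u v" "on_geodesic G x y u" "on_geodesic G y x v"
      using mmd_through by blast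
    then show "\<exists>z\<in>S. on_geodesic G x y z \<or> on_geodesic G y x z" using cover by blast
  qed (use cover in blast)
qed

lemma maker_goal_iff_mmd_cover:
  "maker_goal G M \<longleftrightarrow> (\<forall>u v. mmd G u v \<longrightarrow> u \<in> M \<or> v \<in> M)"
proof
  assume "maker_goal G M"
  then show "\<forall>u v. mmd G u v \<longrightarrow> u \<in> M \<or> v \<in> M"
    unfolding maker_goal_def strong_resolving_set_iff_mmd_cover by blast
next
  assume "\<forall>u v. mmd G u v \<longrightarrow> u \<in> M \<or> v \<in> M"
  then have "strong_resolving_set G (M \<inter> verts G)"
    unfolding strong_resolving_set_iff_mmd_cover mmd_def by blast
  then show "maker_goal G M" unfolding maker_goal_def by blast
qed

end

section \<open>The Maker-Breaker game\<close>

lemma maker_wins_not_breaker_wins: "maker_wins G t M B \<Longrightarrow> \<not> breaker_wins G t M B"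
proof (induction rule: maker_wins.induct)
  case (mw_end M B t)
  then show ?case by (auto elim: breaker_wins.cases)
next
  case (mw_maker v M B)
  then show ?case by (auto elim: breaker_wins.cases)
next
  case (mw_breaker M B)
  then show ?case by (blast elim: breaker_wins.cases)
qed

lemma free_insert_maker [simp]: "free G (insert v M) B = free G M B - {v}"
  by (auto simp: free_def)

lemma free_insert_breaker [simp]: "free G M (insert v B) = free G M B - {v}"
  by (auto simp: free_def)

text \<open>The path b, a, c in the strong resolving graph.\<close>

definition mmd_cherry :: "'a graph \<Rightarrow> 'a \<Rightarrow> 'a \<Rightarrow> 'a \<Rightarrow> bool" where
  "mmd_cherry G a b c \<longleftrightarrow> b \<noteq> c \<and> mmd G a b \<and> mmd G a c"

definition maker_safe :: "'a graph \<Rightarrow> 'a set \<Rightarrow> 'a set \<Rightarrow> bool" where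
  "maker_safe G M B \<longleftrightarrow> (\<forall>x y. mmd G x y \<longrightarrow> x \<in> M \<or> y \<in> M \<or> x \<notin> B \<and> y \<notin> B)"

context connected_graph
begin

lemma finite_free: "finite (free G M B)"
  using finite_verts by (simp add: free_def)

lemma card_free_less:
  assumes "free G M' B' \<subseteq> free G M B - {v}" "v \<in> free G M B"
  shows "card (free G M' B') < card (free G M B)"
proof -
  have "card (free G M' B') \<le> card (free G M B - {v})"
    using assms(1) finite_free by (intro card_mono) auto
  then show ?thesis using finite_free assms(2) card_Diff1_less by (metis order.strict_trans1)
qed

lemma breaker_wins_if_owns_mmd_pair:
  assumes "mmd G x y" "x \<in> B" "y \<in> B" "M \<inter> B = {}"
  shows "breaker_wins G t M B"
  using assms(2-4)
proof (induction "card (free G M B)" arbitrary: t M B rule: less_induct)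
  case less
  show ?case
  proof (cases "free G M B = {}")
    case True
    have "\<not> maker_goal G M" using assms(1) less.prems by (auto simp: maker_goal_iff_mmd_cover)
    then show ?thesis using True by (metis bw_end)
  next
    case False
    have "breaker_wins G False (insert v M) B" if "v \<in> free G M B" for v
      using less.hyps[of "insert v M" B False] less.prems that card_free_less[of "insert v M" B M B v]
      by (auto simp: free_def)
    moreover have "breaker_wins G True M (insert v B)" if "v \<in> free G M B" for v
      using less.hyps[of M "insert v B" True] less.prems that card_free_less[of M "insert v B" M B v]
      by (auto simp: free_def)
    ultimately show ?thesis
      using False by (cases t) (auto intro: bw_maker bw_breaker)
  qed
qed

text \<open>Breaker claims the centre a; Maker can then take at most one of b and c, and Breaker
  takes the other.\<close>

lemma breaker_wins_at_cherry:
  assumes "M \<inter> B = {}" and cherry: "mmd_cherry G a b c"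
    and free: "a \<in> free G M B" "b \<in> free G M B" "c \<in> free G M B"
  shows "breaker_wins G False M B"
proof -
  have "breaker_wins G True M (insert a B)"
  proof (rule bw_maker)
    show "free G M (insert a B) \<noteq> {}" using free cherry by (auto simp: mmd_cherry_def)
  next
    show "\<forall>v\<in>free G M (insert a B). breaker_wins G False (insert v M) (insert a B)"
    proof
      fix v assume v: "v \<in> free G M (insert a B)"
      obtain w where w: "w \<in> {b, c}" "w \<noteq> v" using cherry by (auto simp: mmd_cherry_def)
      then have "mmd G a w" using cherry by (auto simp: mmd_cherry_def)
      moreover have "w \<noteq> a" using mmd_D(3)[OF \<open>mmd G a w\<close>] by blast
      ultimately have "w \<in> free G (insert v M) (insert a B)" using w free by auto
      then show "breaker_wins G False (insert v M) (insert a B)"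
        using \<open>mmd G a w\<close> breaker_wins_if_owns_mmd_pair[of a w "insert w (insert a B)"] assms(1) v free
        by (auto simp: free_def intro: bw_breaker)
    qed
  qed
  then show ?thesis using free(1) by (rule bw_breaker[rotated])
qed

lemma O_SR_Obreaker_if_cherries:
  assumes cherries: "\<forall>v\<in>verts G. \<exists>a b c. mmd_cherry G a b c \<and> v \<notin> {a, b, c}"
  shows "O_SR G = Obreaker"
proof -
  have in_verts: "{a, b, c} \<subseteq> verts G" if "mmd_cherry G a b c" for a b c
    using that mmd_D(1,2)[of G a b] mmd_D(2)[of G a c] unfolding mmd_cherry_def by blast
  have M_game: "breaker_wins G True {} {}"
  proof (rule bw_maker)
    show "free G {} {} \<noteq> {}" using verts_nonempty by (simp add: free_def)
    show "\<forall>v\<in>free G {} {}. breaker_wins G False (insert v {}) {}"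
    proof
      fix v assume "v \<in> free G {} {}"
      then obtain a b c where "mmd_cherry G a b c" "v \<notin> {a, b, c}"
        using cherries by (auto simp: free_def)
      then show "breaker_wins G False (insert v {}) {}"
        using in_verts by (intro breaker_wins_at_cherry[of _ _ a b c]) (auto simp: free_def)
    qed
  qed
  obtain v where "v \<in> verts G" using verts_nonempty by blast
  then obtain a b c where "mmd_cherry G a b c" using cherries by blast
  then have B_game: "breaker_wins G False {} {}"
    using in_verts by (intro breaker_wins_at_cherry[of _ _ a b c]) (auto simp: free_def)
  have "\<not> maker_wins G True {} {}" using M_game maker_wins_not_breaker_wins by blast
  then show ?thesis using M_game B_game by (simp add: O_SR_def)
qed

lemma maker_goal_if_maker_safe:
  assumes "free G M B = {}" and safe: "maker_safe G M B"
  shows "maker_goal G M"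
  unfolding maker_goal_iff_mmd_cover
proof (intro allI impI)
  fix u v assume uv: "mmd G u v"
  then have "u \<in> M \<union> B" "v \<in> M \<union> B" using assms(1) mmd_D(1,2)[OF uv] by (auto simp: free_def)
  then show "u \<in> M \<or> v \<in> M" using safe uv unfolding maker_safe_def by blast
qed

lemma maker_safe_answer:
  assumes matching: "\<forall>a b c. mmd G a b \<and> mmd G a c \<longrightarrow> b = c"
    and safe: "maker_safe G M B" and vp: "mmd G v p"
  shows "maker_safe G (insert p M) (insert v B)"
  unfolding maker_safe_def
proof (intro allI impI)
  fix x y assume xy: "mmd G x y"
  have "y = p" if "x = v" using matching xy vp that by blast
  moreover have "x = p" if "y = v" using matching mmd_sym[OF xy] vp that by blast
  ultimately show "x \<in> insert p M \<or> y \<in> insert p M \<or> x \<notin> insert v B \<and> y \<notin> insert v B"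
    using safe xy unfolding maker_safe_def by blast
qed

lemma maker_safe_unpaired:
  assumes safe: "maker_safe G M B" and v: "v \<in> free G M B"
    and unpaired: "\<forall>p. mmd G v p \<longrightarrow> p \<notin> free G M B"
  shows "maker_safe G M (insert v B)"
  unfolding maker_safe_def
proof (intro allI impI)
  fix x y assume xy: "mmd G x y"
  have "x \<in> M \<or> y \<in> M \<or> x \<notin> B \<and> y \<notin> B" using safe xy unfolding maker_safe_def by blast
  moreover have "y \<notin> free G M B" if "x = v" using unpaired xy that by blast
  moreover have "x \<notin> free G M B" if "y = v" using unpaired mmd_sym[OF xy] that by blast
  moreover have "x \<in> verts G" "y \<in> verts G" using mmd_D(1,2)[OF xy] by auto
  ultimately show "x \<in> M \<or> y \<in> M \<or> x \<notin> insert v B \<and> y \<notin> insert v B"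
    using v unfolding free_def by blast
qed

text \<open>Pairing strategy: when Breaker claims a vertex, Maker claims its unique MMD partner.\<close>

lemma maker_wins_pairing:
  assumes matching: "\<forall>a b c. mmd G a b \<and> mmd G a c \<longrightarrow> b = c"
  shows "maker_safe G M B \<Longrightarrow> maker_wins G t M B"
proof (induction "card (free G M B)" arbitrary: t M B rule: less_induct)
  case less
  have IH: "maker_wins G t' M' B'"
    if "maker_safe G M' B'" "free G M' B' \<subseteq> free G M B - {v}" "v \<in> free G M B" for t' M' B' v
    using less.hyps that(1) card_free_less[OF that(2,3)] by blast
  show ?case
  proof (cases "free G M B = {}")
    case True
    then show ?thesis using maker_goal_if_maker_safe[OF True less.prems] by (rule mw_end)
  next
    case nonempty: False
    show ?thesis
    proof (cases t)
      case True
      obtain v where v: "v \<in> free G M B" using nonempty by blast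
      have "maker_wins G False (insert v M) B"
        using less.prems v by (intro IH[of _ _ v]) (auto simp: maker_safe_def)
      then show ?thesis using True mw_maker[OF v] by simp
    next
      case False
      have "maker_wins G True M (insert v B)" if v: "v \<in> free G M B" for v
      proof (cases "\<exists>p. mmd G v p \<and> p \<in> free G M B")
        case True
        then obtain p where p: "mmd G v p" "p \<in> free G M B" by blast
        have "p \<noteq> v" using mmd_D(3)[OF p(1)] by blast
        then have "p \<in> free G M (insert v B)" using p(2) by simp
        moreover have "maker_wins G False (insert p M) (insert v B)"
          using maker_safe_answer[OF matching less.prems p(1)] v by (intro IH[of _ _ v]) auto
        ultimately show ?thesis by (rule mw_maker)
      next
        case False
        then show ?thesis
          using maker_safe_unpaired[OF less.prems v] v by (intro IH[of _ _ v]) auto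
      qed
      then show ?thesis using False mw_breaker[OF nonempty] by simp
    qed
  qed
qed

lemma O_SR_Omaker_if_matching:
  assumes "\<forall>a b c. mmd G a b \<and> mmd G a c \<longrightarrow> b = c"
  shows "O_SR G = Omaker"
proof -
  have "maker_safe G {} {}" by (simp add: maker_safe_def)
  then have "maker_wins G t {} {}" for t using maker_wins_pairing[OF assms] by blast
  then show ?thesis unfolding O_SR_def by simp
qed

end

section \<open>Cartesian products\<close>

lemma verts_cart_prod [simp]: "verts (G \<box> H) = verts G \<times> verts H"
  by (simp add: cart_prod_def verts_def)

lemma adj_cart_prod [simp]:
  "adj (G \<box> H) (u, w) (u', w') \<longleftrightarrow> u = u' \<and> adj H w w' \<or> w = w' \<and> adj G u u'"
  by (simp add: cart_prod_def adj_def)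

lemma distance_function_cart_prod:
  assumes f: "distance_function G f" and g: "distance_function H g"
  shows "distance_function (G \<box> H) (\<lambda>x y. f (fst x) (fst y) + g (snd x) (snd y))"
  unfolding distance_function_def
proof (intro conjI ballI impI)
  fix y assume "y \<in> verts (G \<box> H)"
  then show "f (fst y) (fst y) + g (snd y) (snd y) = 0"
    using distance_function_self[OF f] distance_function_self[OF g] by auto
next
  fix x y assume xy: "x \<in> verts (G \<box> H)" "y \<in> verts (G \<box> H)" "x \<noteq> y"
  obtain u w u' w' where e: "x = (u, w)" "y = (u', w')" by fastforce
  show "\<exists>x'\<in>verts (G \<box> H). adj (G \<box> H) x x' \<and>
      f (fst x) (fst y) + g (snd x) (snd y) = Suc (f (fst x') (fst y) + g (snd x') (snd y))"
  proof (cases "u = u'")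
    case False
    then obtain a where "a \<in> verts G" "adj G u a" "f u u' = Suc (f a u')"
      using distance_function_step[OF f, of u u'] xy e by auto
    then show ?thesis using xy e by (intro bexI[of _ "(a, w)"]) auto
  next
    case True
    then have "w \<noteq> w'" using xy e by auto
    then obtain b where "b \<in> verts H" "adj H w b" "g w w' = Suc (g b w')"
      using distance_function_step[OF g, of w w'] xy e by auto
    then show ?thesis using xy e True by (intro bexI[of _ "(u, b)"]) auto
  qed
next
  fix x x' y
  assume V: "x \<in> verts (G \<box> H)" "x' \<in> verts (G \<box> H)" "y \<in> verts (G \<box> H)"
    and a: "adj (G \<box> H) x x'"
  obtain u w u' w' where e: "x = (u, w)" "x' = (u', w')" by fastforce
  then have "u = u' \<and> adj H w w' \<or> w = w' \<and> adj G u u'" using a by simp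
  then show "f (fst x) (fst y) + g (snd x) (snd y) \<le> Suc (f (fst x') (fst y) + g (snd x') (snd y))"
    using distance_function_adj[OF f] distance_function_adj[OF g] V e by fastforce
qed

lemma (in connected_graph) not_md_self:
  assumes "2 \<le> card (verts G)" "g \<in> verts G"
  shows "\<not> md G g g"
proof
  assume md: "md G g g"
  obtain y where "y \<in> verts G" "y \<noteq> g"
    using assms by (metis card_le_Suc0_iff_eq not_less_eq_eq numeral_2_eq_2 finite_verts)
  then obtain w where w: "w \<in> verts G" "adj G g w" "dist G g y = Suc (dist G w y)"
    using dist_step assms(2) by metis
  then have "w \<noteq> g" by auto
  moreover have "dist G w g \<le> dist G g g" using md w unfolding md_def by blast
  ultimately show False using dist_eq_0_iff w(1) assms(2) by simp
qed

locale connected_graph_pair = G: connected_graph G + H: connected_graph H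
  for G :: "'a graph" and H :: "'b graph"
begin

lemma distance_function_cart_prod_dist:
  "distance_function (G \<box> H) (\<lambda>x y. dist G (fst x) (fst y) + dist H (snd x) (snd y))"
  using distance_function_cart_prod[OF G.distance_function H.distance_function] .

sublocale prod: connected_graph "G \<box> H"
proof
  show "finite (verts (G \<box> H))" using G.finite_verts H.finite_verts by simp
  show "adj (G \<box> H) y x"
    if "x \<in> verts (G \<box> H)" "y \<in> verts (G \<box> H)" "adj (G \<box> H) x y" for x y
  proof -
    obtain u w u' w' where "x = (u, w)" "y = (u', w')" by fastforce
    then show ?thesis using that G.adj_sym H.adj_sym by auto
  qed
  show "connected (G \<box> H)"
    using connected_if_distance_function[OF distance_function_cart_prod_dist]
      G.verts_nonempty H.verts_nonempty by simp
qed

lemma dist_cart_prod: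
  assumes "u \<in> verts G" "u' \<in> verts G" "w \<in> verts H" "w' \<in> verts H"
  shows "dist (G \<box> H) (u, w) (u', w') = dist G u u' + dist H w w'"
  using dist_eq_distance_function[OF distance_function_cart_prod_dist] assms by simp

lemma md_cart_prod_iff:
  assumes V: "u \<in> verts G" "u' \<in> verts G" "w \<in> verts H" "w' \<in> verts H"
  shows "md (G \<box> H) (u, w) (u', w') \<longleftrightarrow> md G u u' \<and> md H w w'"
proof -
  have d: "dist (G \<box> H) (a, b) (u', w') = dist G a u' + dist H b w'"
    if "a \<in> verts G" "b \<in> verts H" for a b
    using dist_cart_prod V that by simp
  show ?thesis
  proof
    assume m: "md (G \<box> H) (u, w) (u', w')"
    have "dist G a u' \<le> dist G u u'" if "a \<in> verts G" "adj G u a" for a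
      using m V that unfolding md_def by (auto simp: d)
    moreover have "dist H b w' \<le> dist H w w'" if "b \<in> verts H" "adj H w b" for b
      using m V that unfolding md_def by (auto simp: d)
    ultimately show "md G u u' \<and> md H w w'" unfolding md_def by blast
  next
    assume m: "md G u u' \<and> md H w w'"
    show "md (G \<box> H) (u, w) (u', w')"
      unfolding md_def
    proof (intro ballI impI)
      fix x assume x: "x \<in> verts (G \<box> H)" "adj (G \<box> H) (u, w) x"
      then obtain a b where e: "x = (a, b)" "a \<in> verts G" "b \<in> verts H" by auto
      then have "u = a \<and> adj H w b \<or> w = b \<and> adj G u a" using x by simp
      then show "dist (G \<box> H) x (u', w') \<le> dist (G \<box> H) (u, w) (u', w')"
        using m e V d unfolding md_def by auto
    qed
  qed
qed

lemma mmd_cart_prodI: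
  "mmd G u u' \<Longrightarrow> mmd H w w' \<Longrightarrow> mmd (G \<box> H) (u, w) (u', w')"
  using md_cart_prod_iff unfolding mmd_def by auto

lemma mmd_cart_prodD:
  assumes "2 \<le> card (verts G)" "2 \<le> card (verts H)" and m: "mmd (G \<box> H) (u, w) (u', w')"
  shows "mmd G u u' \<and> mmd H w w'"
proof -
  have V: "u \<in> verts G" "u' \<in> verts G" "w \<in> verts H" "w' \<in> verts H"
    using mmd_D[OF m] by auto
  then have md: "md G u u'" "md H w w'"
    "md G u' u" "md H w' w"
    using m md_cart_prod_iff unfolding mmd_def by auto
  then have "u \<noteq> u'" "w \<noteq> w'"
    using G.not_md_self H.not_md_self assms(1,2) V by metis+
  then show ?thesis using md V unfolding mmd_def by auto
qed

end

context connected_graph_pair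
begin

lemma O_SR_cart_prod_Obreaker_centres:
  assumes m: "mmd G u u'"
    and centres: "\<forall>w\<in>verts H. \<exists>a b c. a \<noteq> w \<and> mmd_cherry H a b c"
  shows "O_SR (G \<box> H) = Obreaker"
proof (rule prod.O_SR_Obreaker_if_cherries, intro ballI)
  fix x assume "x \<in> verts (G \<box> H)"
  then obtain x1 x2 where x: "x = (x1, x2)" "x2 \<in> verts H" by auto
  obtain a b c where abc: "a \<noteq> x2" "mmd_cherry H a b c" using centres x(2) by blast
  obtain g g' where g: "mmd G g g'" "g' \<noteq> x1"
    using m mmd_sym[OF m] mmd_D(3)[OF m] by metis
  then have "mmd_cherry (G \<box> H) (g, a) (g', b) (g', c)"
    using abc(2) mmd_cart_prodI unfolding mmd_cherry_def by auto
  then show "\<exists>a b c. mmd_cherry (G \<box> H) a b c \<and> x \<notin> {a, b, c}"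
    using x abc(1) g(2) by blast
qed

lemma O_SR_cart_prod_Obreaker_edges:
  assumes cherry: "mmd_cherry G g g1 g2"
    and edges: "\<forall>w\<in>verts H. \<exists>a b. a \<noteq> w \<and> b \<noteq> w \<and> mmd H a b"
  shows "O_SR (G \<box> H) = Obreaker"
proof (rule prod.O_SR_Obreaker_if_cherries, intro ballI)
  fix x assume "x \<in> verts (G \<box> H)"
  then obtain x1 x2 where x: "x = (x1, x2)" "x2 \<in> verts H" by auto
  obtain a b where ab: "a \<noteq> x2" "b \<noteq> x2" "mmd H a b" using edges x(2) by blast
  have "mmd_cherry (G \<box> H) (g, a) (g1, b) (g2, b)"
    using cherry ab(3) mmd_cart_prodI unfolding mmd_cherry_def by auto
  then show "\<exists>a b c. mmd_cherry (G \<box> H) a b c \<and> x \<notin> {a, b, c}"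
    using x ab(1,2) by blast
qed

lemma O_SR_cart_prod_Omaker:
  assumes "2 \<le> card (verts G)" "2 \<le> card (verts H)"
    and matching: "\<forall>a b c. mmd G a b \<and> mmd G a c \<longrightarrow> b = c" "\<forall>a b c. mmd H a b \<and> mmd H a c \<longrightarrow> b = c"
  shows "O_SR (G \<box> H) = Omaker"
proof (rule prod.O_SR_Omaker_if_matching, intro allI impI)
  fix x y z assume "mmd (G \<box> H) x y \<and> mmd (G \<box> H) x z"
  moreover obtain x1 x2 y1 y2 z1 z2 where "x = (x1, x2)" "y = (y1, y2)" "z = (z1, z2)" by fastforce
  ultimately show "y = z" using mmd_cart_prodD[OF assms(1,2)] matching by metis
qed

end

section \<open>Complete graphs and cycles\<close>

lemma verts_K [simp]: "verts (K n) = {0..<n}"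
  by (simp add: complete_graph_def verts_def)

lemma adj_K [simp]: "adj (K n) i j \<longleftrightarrow> i \<noteq> j"
  by (simp add: complete_graph_def adj_def)

lemma distance_function_K: "distance_function (K n) (\<lambda>i j. if i = j then 0 else 1)"
  unfolding distance_function_def by auto

lemma connected_graph_K: "1 \<le> n \<Longrightarrow> connected_graph (K n)"
  by unfold_locales (auto intro: connected_if_distance_function[OF distance_function_K])

lemma mmd_K: "i < n \<Longrightarrow> j < n \<Longrightarrow> i \<noteq> j \<Longrightarrow> mmd (K n) i j"
  using dist_eq_distance_function[OF distance_function_K] by (simp add: mmd_def md_def)

lemma K_cherry_centres:
  assumes "3 \<le> n"
  shows "\<forall>h\<in>verts (K n). \<exists>a b c. a \<noteq> h \<and> mmd_cherry (K n) a b c"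
proof
  fix h assume "h \<in> verts (K n)"
  show "\<exists>a b c. a \<noteq> h \<and> mmd_cherry (K n) a b c"
  proof (cases "h = 0")
    case True
    then show ?thesis using assms mmd_K[of 1 n 0] mmd_K[of 1 n 2]
      by (intro exI[of _ 1] exI[of _ 0] exI[of _ 2]) (auto simp: mmd_cherry_def)
  next
    case False
    then show ?thesis using assms mmd_K[of 0 n 1] mmd_K[of 0 n 2]
      by (intro exI[of _ 0] exI[of _ 1] exI[of _ 2]) (auto simp: mmd_cherry_def)
  qed
qed

definition cyc_succ :: "nat \<Rightarrow> nat \<Rightarrow> nat" where
  "cyc_succ n i = (if i + 1 = n then 0 else i + 1)"

definition cyc_pred :: "nat \<Rightarrow> nat \<Rightarrow> nat" where
  "cyc_pred n i = (if i = 0 then n - 1 else i - 1)"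

text \<open>For i, j < n this is (i - j) mod n, the number of forward steps from j to i.\<close>

definition cyc_gap :: "nat \<Rightarrow> nat \<Rightarrow> nat \<Rightarrow> nat" where
  "cyc_gap n i j = (if j \<le> i then i - j else i + n - j)"

definition cyc_dist :: "nat \<Rightarrow> nat \<Rightarrow> nat \<Rightarrow> nat" where
  "cyc_dist n i j = min (cyc_gap n i j) (cyc_gap n j i)"

lemma cyc_succ_less: "i < n \<Longrightarrow> cyc_succ n i < n"
  unfolding cyc_succ_def by auto

lemma cyc_pred_less: "i < n \<Longrightarrow> cyc_pred n i < n"
  unfolding cyc_pred_def by auto

lemma cyc_succ_pred: "i < n \<Longrightarrow> cyc_succ n (cyc_pred n i) = i"
  unfolding cyc_succ_def cyc_pred_def by auto

lemma cyc_gap_self [simp]: "cyc_gap n i i = 0"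
  unfolding cyc_gap_def by simp

lemma cyc_gap_sum: "i < n \<Longrightarrow> j < n \<Longrightarrow> i \<noteq> j \<Longrightarrow> cyc_gap n i j + cyc_gap n j i = n"
  unfolding cyc_gap_def by auto

lemma cyc_gap_inj: "i < n \<Longrightarrow> j < n \<Longrightarrow> j' < n \<Longrightarrow> cyc_gap n i j = cyc_gap n i j' \<Longrightarrow> j = j'"
  unfolding cyc_gap_def by (auto split: if_splits)

lemma cyc_gap_succ_self: "i < n \<Longrightarrow> 2 \<le> n \<Longrightarrow> cyc_gap n (cyc_succ n i) i = 1"
  unfolding cyc_gap_def cyc_succ_def by auto

lemma cyc_dist_self [simp]: "cyc_dist n i i = 0"
  by (simp add: cyc_dist_def)

lemma cyc_dist_sym: "cyc_dist n i j = cyc_dist n j i"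
  by (simp add: cyc_dist_def min.commute)

lemma cyc_dist_le_half: "i < n \<Longrightarrow> j < n \<Longrightarrow> cyc_dist n i j \<le> n div 2"
  using cyc_gap_sum[of i n j] by (cases "i = j") (auto simp: cyc_dist_def)

lemma cyc_gaps_succ:
  assumes "i < n" "j < n" "i \<noteq> j" "cyc_succ n i \<noteq> j"
  shows "cyc_gap n (cyc_succ n i) j = Suc (cyc_gap n i j)" "cyc_gap n j i = Suc (cyc_gap n j (cyc_succ n i))"
  using assms unfolding cyc_gap_def cyc_succ_def by auto

lemma cyc_dist_succ_le:
  assumes "2 \<le> n" "i < n" "j < n"
  shows "cyc_dist n i j \<le> Suc (cyc_dist n (cyc_succ n i) j) \<and>
    cyc_dist n (cyc_succ n i) j \<le> Suc (cyc_dist n i j)"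
proof -
  consider "i = j" | "cyc_succ n i = j" | "i \<noteq> j" "cyc_succ n i \<noteq> j" by blast
  then show ?thesis
  proof cases
    case 3
    then show ?thesis using cyc_gaps_succ[OF assms(2,3) 3] by (simp add: cyc_dist_def min_def)
  qed (use cyc_gap_succ_self assms in \<open>auto simp: cyc_dist_def\<close>)
qed

lemma cyc_dist_succ_closer:
  assumes "2 \<le> n" "i < n" "j < n" "i \<noteq> j" "cyc_gap n j i \<le> cyc_gap n i j"
  shows "cyc_dist n i j = Suc (cyc_dist n (cyc_succ n i) j)"
proof (cases "cyc_succ n i = j")
  case True
  then show ?thesis using assms cyc_gap_succ_self by (auto simp: cyc_dist_def)
next
  case False
  then show ?thesis using assms cyc_gaps_succ[OF assms(2-4) False] by (simp add: cyc_dist_def min_def)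
qed

lemma cyc_dist_pred_closer:
  assumes "2 \<le> n" "i < n" "j < n" "i \<noteq> j" "cyc_gap n i j \<le> cyc_gap n j i"
  shows "cyc_dist n i j = Suc (cyc_dist n (cyc_pred n i) j)"
proof -
  define p where "p = cyc_pred n i"
  have p: "p < n" "cyc_succ n p = i" using assms cyc_pred_less cyc_succ_pred by (auto simp: p_def)
  show ?thesis
  proof (cases "p = j")
    case True
    then show ?thesis using assms p cyc_gap_succ_self[of p n] cyc_gap_sum[of i n j]
      by (auto simp: cyc_dist_def p_def[symmetric])
  next
    case False
    then show ?thesis using assms p cyc_gaps_succ[of p n j]
      by (simp add: cyc_dist_def min_def p_def[symmetric])
  qed
qed

lemma verts_C [simp]: "verts (C n) = {0..<n}"
  by (simp add: cycle_graph_def verts_def)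

lemma adj_C:
  assumes "i < n" "j < n"
  shows "adj (C n) i j \<longleftrightarrow> j = cyc_succ n i \<or> i = cyc_succ n j"
  using assms by (auto simp: cycle_graph_def adj_def cyc_succ_def mod_Suc)

lemma distance_function_C:
  assumes n: "2 \<le> n"
  shows "distance_function (C n) (cyc_dist n)"
  unfolding distance_function_def
proof (intro conjI ballI impI)
  fix y assume "y \<in> verts (C n)"
  then show "cyc_dist n y y = 0" by simp
next
  fix x y assume xy: "x \<in> verts (C n)" "y \<in> verts (C n)" "x \<noteq> y"
  show "\<exists>x'\<in>verts (C n). adj (C n) x x' \<and> cyc_dist n x y = Suc (cyc_dist n x' y)"
  proof (cases "cyc_gap n x y \<le> cyc_gap n y x")
    case True
    then show ?thesis
      using xy cyc_dist_pred_closer[OF n] adj_C cyc_pred_less cyc_succ_pred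
      by (intro bexI[of _ "cyc_pred n x"]) auto
  next
    case False
    then show ?thesis
      using xy cyc_dist_succ_closer[OF n] adj_C cyc_succ_less
      by (intro bexI[of _ "cyc_succ n x"]) auto
  qed
next
  fix x x' y assume "x \<in> verts (C n)" "x' \<in> verts (C n)" "y \<in> verts (C n)" "adj (C n) x x'"
  then show "cyc_dist n x y \<le> Suc (cyc_dist n x' y)"
    using adj_C cyc_dist_succ_le[OF n] by auto
qed

lemma connected_graph_C:
  assumes "3 \<le> n"
  shows "connected_graph (C n)"
proof
  show "finite (verts (C n))" by simp
  show "adj (C n) y x" if "adj (C n) x y" for x y
    using that by (auto simp: cycle_graph_def adj_def)
  show "connected (C n)"
    using connected_if_distance_function[OF distance_function_C] assms by simp
qed

lemma dist_C: "2 \<le> n \<Longrightarrow> i < n \<Longrightarrow> j < n \<Longrightarrow> dist (C n) i j = cyc_dist n i j"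
  using dist_eq_distance_function[OF distance_function_C] by simp

lemma mmd_C_if_antipodal:
  assumes n: "2 \<le> n" and ij: "i < n" "j < n" "cyc_dist n i j = n div 2"
  shows "mmd (C n) i j"
proof -
  have far: "md (C n) a b" if "a < n" "b < n" "cyc_dist n a b = n div 2" for a b
    unfolding md_def
  proof (intro ballI impI)
    fix w assume "w \<in> verts (C n)" "adj (C n) a w"
    then show "dist (C n) w b \<le> dist (C n) a b"
      using dist_C[OF n] cyc_dist_le_half that by simp
  qed
  have "i \<noteq> j" using ij n by auto
  then show ?thesis using far ij cyc_dist_sym[of n i j] unfolding mmd_def by simp
qed

lemma cyc_dist_increase:
  assumes k: "2 \<le> k" and ij: "i < 2 * k" "j < 2 * k" "i \<noteq> j" "cyc_dist (2 * k) i j < k"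
  shows "\<exists>i'. i' < 2 * k \<and> adj (C (2 * k)) i i' \<and> cyc_dist (2 * k) i j < cyc_dist (2 * k) i' j"
proof -
  let ?n = "2 * k"
  have sum: "cyc_gap ?n i j + cyc_gap ?n j i = ?n" using cyc_gap_sum ij by blast
  show ?thesis
  proof (cases "cyc_gap ?n i j \<le> cyc_gap ?n j i")
    case True
    then have "cyc_gap ?n i j < k" using ij(4) by (simp add: cyc_dist_def)
    moreover have "cyc_succ ?n i \<noteq> j" using True sum k cyc_gap_succ_self[of i ?n] ij by auto
    ultimately have "cyc_dist ?n i j < cyc_dist ?n (cyc_succ ?n i) j"
      using True sum ij cyc_gaps_succ[of i ?n j] by (simp add: cyc_dist_def min_def)
    then show ?thesis using ij adj_C cyc_succ_less by blast
  next
    case False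
    define p where "p = cyc_pred ?n i"
    have p: "p < ?n" "cyc_succ ?n p = i" using ij cyc_pred_less cyc_succ_pred by (auto simp: p_def)
    have lt: "cyc_gap ?n j i < k" using False ij(4) by (simp add: cyc_dist_def)
    have "p \<noteq> j" using False sum k p cyc_gap_succ_self[of j ?n] ij by auto
    then have "cyc_gap ?n i j = Suc (cyc_gap ?n p j)" "cyc_gap ?n j p = Suc (cyc_gap ?n j i)"
      using cyc_gaps_succ[of p ?n j] p ij by auto
    then have "cyc_dist ?n p j = Suc (cyc_dist ?n i j)"
      using False lt sum by (simp add: cyc_dist_def min_def)
    then have "cyc_dist ?n i j < cyc_dist ?n p j" by simp
    then show ?thesis using ij p adj_C by blast
  qed
qed

lemma cyc_dist_eq_half_if_mmd:
  assumes k: "2 \<le> k" and m: "mmd (C (2 * k)) i j"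
  shows "cyc_dist (2 * k) i j = k"
proof (rule ccontr)
  assume "cyc_dist (2 * k) i j \<noteq> k"
  moreover have ij: "i < 2 * k" "j < 2 * k" "i \<noteq> j" "md (C (2 * k)) i j"
    using m by (auto simp: mmd_def)
  ultimately have "cyc_dist (2 * k) i j < k" using cyc_dist_le_half[of i "2 * k" j] by simp
  then obtain i' where "i' < 2 * k" "adj (C (2 * k)) i i'" "cyc_dist (2 * k) i j < cyc_dist (2 * k) i' j"
    using cyc_dist_increase[OF k ij(1-3)] by blast
  then show False using ij(4) dist_C[of "2 * k"] k ij unfolding md_def by fastforce
qed

lemma C_even_mmd_unique:
  assumes k: "2 \<le> k"
  shows "\<forall>a b c. mmd (C (2 * k)) a b \<and> mmd (C (2 * k)) a c \<longrightarrow> b = c"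
proof (intro allI impI)
  fix a b c assume "mmd (C (2 * k)) a b \<and> mmd (C (2 * k)) a c"
  then have m: "mmd (C (2 * k)) a b" "mmd (C (2 * k)) a c" by blast+
  have gap: "cyc_gap (2 * k) a x = k" if "mmd (C (2 * k)) a x" for x
  proof -
    have "a < 2 * k" "x < 2 * k" "a \<noteq> x" using that by (auto simp: mmd_def)
    then show ?thesis
      using cyc_dist_eq_half_if_mmd[OF k that] cyc_gap_sum[of a "2 * k" x]
      by (auto simp: cyc_dist_def min_def split: if_splits)
  qed
  show "b = c" using cyc_gap_inj[of a "2 * k" b c] gap[OF m(1)] gap[OF m(2)] m by (auto simp: mmd_def)
qed

lemma C_odd_cherry_centres:
  assumes "1 \<le> k"
  shows "\<forall>h\<in>verts (C (2 * k + 1)). \<exists>a b c. a \<noteq> h \<and> mmd_cherry (C (2 * k + 1)) a b c"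
proof
  fix h assume "h \<in> verts (C (2 * k + 1))"
  have antipodal: "mmd (C (2 * k + 1)) i j"
    if "i < 2 * k + 1" "j < 2 * k + 1" "cyc_dist (2 * k + 1) i j = k" for i j
    using mmd_C_if_antipodal[of "2 * k + 1" i j] that assms by simp
  have "mmd (C (2 * k + 1)) k 0" "mmd (C (2 * k + 1)) k (2 * k)"
    "mmd (C (2 * k + 1)) 0 k" "mmd (C (2 * k + 1)) 0 (k + 1)"
    using antipodal[of k 0] antipodal[of k "2 * k"] antipodal[of 0 k] antipodal[of 0 "k + 1"] assms
    by (simp_all add: cyc_dist_def cyc_gap_def)
  then have "mmd_cherry (C (2 * k + 1)) k 0 (2 * k)" "mmd_cherry (C (2 * k + 1)) 0 k (k + 1)"
    using assms unfolding mmd_cherry_def by auto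
  moreover have "k \<noteq> 0" using assms by simp
  ultimately show "\<exists>a b c. a \<noteq> h \<and> mmd_cherry (C (2 * k + 1)) a b c"
    by (cases "h = 0") metis+
qed

lemma C_even_mmd_avoiding:
  assumes "2 \<le> k"
  shows "\<forall>h\<in>verts (C (2 * k)). \<exists>a b. a \<noteq> h \<and> b \<noteq> h \<and> mmd (C (2 * k)) a b"
proof
  fix h assume "h \<in> verts (C (2 * k))"
  have antipodal: "mmd (C (2 * k)) i j"
    if "i < 2 * k" "j < 2 * k" "cyc_dist (2 * k) i j = k" for i j
    using mmd_C_if_antipodal[of "2 * k" i j] that assms by simp
  have m: "mmd (C (2 * k)) 0 k" "mmd (C (2 * k)) 1 (k + 1)"
    using antipodal[of 0 k] antipodal[of 1 "k + 1"] assms by (simp_all add: cyc_dist_def cyc_gap_def)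
  show "\<exists>a b. a \<noteq> h \<and> b \<noteq> h \<and> mmd (C (2 * k)) a b"
  proof (cases "h = 0 \<or> h = k")
    case True
    then show ?thesis using m(2) assms by (intro exI[of _ 1] exI[of _ "k + 1"]) auto
  next
    case False
    then show ?thesis using m(1) by (intro exI[of _ 0] exI[of _ k]) auto
  qed
qed

section \<open>Trees\<close>

lemma is_walk_rev: "graph G \<Longrightarrow> is_walk G xs \<Longrightarrow> is_walk G (rev xs)"
proof (induction xs)
  case Nil
  then show ?case by simp
next
  case (Cons x xs)
  show ?case
  proof (cases "xs = []")
    case True
    then show ?thesis using Cons by simp
  next
    case False
    then have "is_walk G xs" "adj G (hd xs) x" "x \<in> verts G"
      using Cons.prems graph_adj_sym[OF Cons.prems(1)] by (auto simp: is_walk_Cons)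
    then show ?thesis using Cons False by (auto intro!: is_walk_append simp: last_rev)
  qed
qed

definition leaf :: "'a graph \<Rightarrow> 'a \<Rightarrow> bool" where
  "leaf T x \<longleftrightarrow> x \<in> verts T \<and> (\<forall>w1 w2. adj T x w1 \<longrightarrow> adj T x w2 \<longrightarrow> w1 = w2)"

lemma (in connected_graph) mmd_if_leaves:
  assumes "leaf G a" "leaf G b" "a \<noteq> b"
  shows "mmd G a b"
proof -
  have "md G x y" if x: "leaf G x" and y: "leaf G y" and xy: "x \<noteq> y" for x y
    unfolding md_def
  proof (intro ballI impI)
    fix w assume w: "adj G x w"
    have "x \<in> verts G" "y \<in> verts G" using x y by (auto simp: leaf_def)
    then obtain x' where "adj G x x'" "dist G x y = Suc (dist G x' y)"
      using dist_step xy by blast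
    then show "dist G w y \<le> dist G x y" using x w unfolding leaf_def by auto
  qed
  then show ?thesis using assms unfolding mmd_def leaf_def by auto
qed

definition is_path :: "'a graph \<Rightarrow> 'a list \<Rightarrow> bool" where
  "is_path T xs \<longleftrightarrow> is_walk T xs \<and> distinct xs"

lemma is_path_rev: "graph T \<Longrightarrow> is_path T P \<Longrightarrow> is_path T (rev P)"
  unfolding is_path_def using is_walk_rev[of T P] by auto

lemma is_path_length_le: "finite (verts T) \<Longrightarrow> is_path T xs \<Longrightarrow> length xs \<le> card (verts T)"
  unfolding is_path_def is_walk_def by (metis card_mono distinct_card)

lemma is_path_adj: "is_path T xs \<Longrightarrow> Suc i < length xs \<Longrightarrow> adj T (xs ! i) (xs ! Suc i)"
  unfolding is_path_def is_walk_def by blast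

lemma is_path_segment:
  assumes P: "is_path T P" and ij: "i \<le> j" "j < length P"
  defines "Q \<equiv> take (Suc (j - i)) (drop i P)"
  shows "is_path T Q" "hd Q = P ! i" "last Q = P ! j" "length Q = Suc (j - i)" "set Q \<subseteq> set P"
proof -
  have "is_walk T (drop i P)" using is_walk_drop P ij unfolding is_path_def by fastforce
  then show "is_path T Q" using P unfolding Q_def is_path_def by (simp add: is_walk_take)
  show "hd Q = P ! i" using ij by (simp add: Q_def hd_drop_conv_nth)
  show "last Q = P ! j" using ij by (simp add: Q_def take_Suc_conv_app_nth)
  show "length Q = Suc (j - i)" using ij by (simp add: Q_def)
  show "set Q \<subseteq> set P" unfolding Q_def by (meson order_trans set_drop_subset set_take_subset)
qed

lemma walk_crosses:
  "is_walk T xs \<Longrightarrow> hd xs \<notin> A \<Longrightarrow> last xs \<in> A \<Longrightarrow> \<exists>y p. y \<notin> A \<and> p \<in> A \<and> adj T y p"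
proof (induction xs)
  case (Cons x xs)
  then show ?case by (cases "xs = []") (auto simp: is_walk_Cons)
qed (simp add: is_walk_def)

locale acyclic_graph =
  fixes T :: "'a graph"
  assumes graph: "graph T" and acyclic: "\<not> has_cycle T"
begin

lemma path_adj_consecutive:
  assumes P: "is_path T P" and ij: "i < j" "j < length P" and a: "adj T (P ! i) (P ! j)"
  shows "j = Suc i"
proof (rule ccontr)
  assume "j \<noteq> Suc i"
  define Q where "Q = take (Suc (j - i)) (drop i P)"
  note Q = is_path_segment[OF P less_imp_le[OF ij(1)] ij(2), folded Q_def]
  have "adj T (last Q) (hd Q)" using graph_adj_sym[OF graph a] Q by simp
  then have "has_cycle T"
    unfolding has_cycle_def using Q \<open>j \<noteq> Suc i\<close> ij by (intro exI[of _ Q]) (auto simp: is_path_def)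
  then show False using acyclic by simp
qed

lemma leaf_last_if_neighbours_on_path:
  assumes R: "is_path T R" "2 \<le> length R" and closed: "\<forall>w. adj T (last R) w \<longrightarrow> w \<in> set R"
  shows "leaf T (last R)"
proof -
  have "R \<noteq> []" using R(2) by auto
  then have last: "last R = R ! (length R - 1)" by (simp add: last_conv_nth)
  have "w = R ! (length R - 2)" if w: "adj T (last R) w" for w
  proof -
    obtain j where j: "j < length R" "R ! j = w" using closed w by (auto simp: in_set_conv_nth)
    have "j \<noteq> length R - 1" using j w last graph_adj_irrefl[OF graph] by auto
    then have "length R - 1 = Suc j"
      using path_adj_consecutive[OF R(1), of j "length R - 1"] j last graph_adj_sym[OF graph w] R(2)
      by simp
    then show ?thesis using j by (metis diff_Suc_1 diff_diff_left one_add_one plus_1_eq_Suc)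
  qed
  moreover have "last R \<in> verts T" using R unfolding is_path_def is_walk_def by auto
  ultimately show ?thesis unfolding leaf_def by metis
qed

lemma path_graph_if_spanning_path:
  assumes P: "is_path T P" and spanning: "set P = verts T"
  shows "path_graph T"
  unfolding path_graph_def
proof (intro exI[of _ "nth P"] conjI allI impI)
  have card: "card (verts T) = length P" using P spanning distinct_card unfolding is_path_def by metis
  have "inj_on (nth P) {0..<length P}" using P inj_on_nth[of P] unfolding is_path_def by auto
  moreover have "nth P ` {0..<length P} = set P" by (force simp: in_set_conv_nth)
  ultimately show "bij_betw (nth P) {0..<card (verts T)} (verts T)"
    using card spanning by (simp add: bij_betw_def)
  fix i j assume ij: "i < card (verts T)" "j < card (verts T)"
  show "adj T (P ! i) (P ! j) \<longleftrightarrow> i = Suc j \<or> j = Suc i"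
  proof
    assume a: "adj T (P ! i) (P ! j)"
    consider "i < j" | "i = j" | "j < i" by linarith
    then show "i = Suc j \<or> j = Suc i"
      using path_adj_consecutive[OF P] ij card a graph_adj_sym[OF graph a] graph_adj_irrefl[OF graph]
      by cases auto
  next
    assume "i = Suc j \<or> j = Suc i"
    then show "adj T (P ! i) (P ! j)"
      using is_path_adj[OF P] ij card graph_adj_sym[OF graph] by auto
  qed
qed

lemma longest_path_ends_are_leaves:
  assumes P: "is_path T P" and longest: "\<forall>Q. is_path T Q \<longrightarrow> length Q \<le> length P"
    and two: "2 \<le> length P"
  shows "leaf T (last P)" "leaf T (hd P)"
proof -
  have last_leaf: "leaf T (last Q)" if Q: "is_path T Q" "length Q = length P" for Q
  proof (rule leaf_last_if_neighbours_on_path)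
    show "is_path T Q" "2 \<le> length Q" using Q two by auto
    show "\<forall>w. adj T (last Q) w \<longrightarrow> w \<in> set Q"
    proof (intro allI impI, rule ccontr)
      fix w assume w: "adj T (last Q) w" "w \<notin> set Q"
      then have "is_path T (Q @ [w])"
        using Q(1) graph_adj_verts[OF graph w(1)] unfolding is_path_def by (simp add: is_walk_append)
      then have "length (Q @ [w]) \<le> length P" using longest by blast
      then show False using Q(2) by simp
    qed
  qed
  show "leaf T (last P)" using last_leaf[OF P] by simp
  show "leaf T (hd P)" using last_leaf[OF is_path_rev[OF graph P]] by (simp add: last_rev)
qed

lemma detour_along_path:
  assumes P: "is_path T P" and R: "is_path T R" "2 \<le> length R" and RP: "set R \<inter> set P = {hd R}"
    and ki: "k < i" "i < length P" "P ! i = hd R" and return: "adj T (last R) (P ! k)"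
  shows False
proof -
  define Q where "Q = take (Suc (i - 1 - k)) (drop k P)"
  have seg: "k \<le> i - 1" "i - 1 < length P" using ki by auto
  note Q = is_path_segment[OF P seg, folded Q_def]
  have Q_eq: "Q = take (i - k) (drop k P)" using ki by (simp add: Q_def Suc_diff_Suc)
  have "drop (i - k) (drop k P) = P ! i # drop (Suc i) P"
    using ki(1) Cons_nth_drop_Suc[OF ki(2)] by simp
  then have "hd R \<in> set (drop (i - k) (drop k P))" using ki(3) by simp
  moreover have "set (take (i - k) (drop k P)) \<inter> set (drop (i - k) (drop k P)) = {}"
    using P by (intro set_take_disj_set_drop_if_distinct) (simp_all add: is_path_def)
  ultimately have "hd R \<notin> set Q" using Q_eq by blast
  then have "x \<notin> set Q" if "x \<in> set R" for x
    using that RP Q(5) by (cases "x = hd R") auto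
  then have disj: "set R \<inter> set Q = {}" by blast
  have "R \<noteq> []" "Q \<noteq> []" using R Q ki by auto
  have "is_walk T (R @ Q)" using R Q return by (intro is_walk_append) (auto simp: is_path_def)
  moreover have "distinct (R @ Q)" using R Q disj ki unfolding is_path_def by simp
  moreover have "adj T (last (R @ Q)) (hd (R @ Q))"
    using is_path_adj[OF P, of "i - 1"] ki Q \<open>R \<noteq> []\<close> \<open>Q \<noteq> []\<close> by simp
  moreover have "3 \<le> length (R @ Q)" using R Q ki by simp
  ultimately have "has_cycle T" unfolding has_cycle_def by blast
  then show False using acyclic by simp
qed

lemma path_cannot_return:
  assumes P: "is_path T P" and R: "is_path T R" "2 \<le> length R" and RP: "set R \<inter> set P = {hd R}"
    and w: "w \<in> set P" "w \<noteq> hd R" "adj T (last R) w"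
  shows False
proof -
  have "hd R \<in> set R \<inter> set P" using RP by simp
  then obtain i where i: "i < length P" "P ! i = hd R" by (auto simp: in_set_conv_nth)
  obtain k where k: "k < length P" "P ! k = w" using w(1) by (auto simp: in_set_conv_nth)
  have "k \<noteq> i" using i k w(2) by auto
  then consider "k < i" | "i < k" by linarith
  then show False
  proof cases
    case 1
    then show False using detour_along_path[OF P R RP 1 i] k w by simp
  next
    case 2
    have "length P - Suc k < length P - Suc i" "length P - Suc i < length (rev P)"
      "rev P ! (length P - Suc i) = hd R"
      "rev P ! (length P - Suc k) = w"
      using 2 i k by (auto simp: rev_nth)
    moreover have "set R \<inter> set (rev P) = {hd R}" using RP by simp
    ultimately show False
      using detour_along_path[OF is_path_rev[OF graph P] R, of "length P - Suc k" "length P - Suc i"] i w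
      by simp
  qed
qed

lemma leaf_outside_path:
  assumes fin: "finite (verts T)" and P: "is_path T P"
    and y: "y \<notin> set P" and p: "p \<in> set P" "adj T p y"
  shows "\<exists>l. leaf T l \<and> l \<notin> set P"
proof -
  define F where "F = (\<lambda>Q. is_path T Q \<and> hd Q = y \<and> set Q \<inter> set P = {})"
  have yV: "y \<in> verts T" and pV: "p \<in> verts T" using graph_adj_verts[OF graph p(2)] by auto
  then have "F [y]" using y unfolding F_def is_path_def by simp
  moreover have "\<forall>Q. F Q \<longrightarrow> length Q < Suc (card (verts T))"
    using is_path_length_le[OF fin] unfolding F_def by (simp add: le_imp_less_Suc)
  ultimately obtain R' where R': "F R'" and longest: "\<forall>Q. F Q \<longrightarrow> length Q \<le> length R'"
    using ex_has_greatest_nat[of F "[y]" length] by blast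
  have "R' \<noteq> []" using R' unfolding F_def is_path_def is_walk_def by blast
  define R where "R = p # R'"
  have R: "is_path T R" "2 \<le> length R" "set R \<inter> set P = {hd R}"
    using R' \<open>R' \<noteq> []\<close> p pV unfolding R_def F_def is_path_def
    by (auto simp: is_walk_Cons neq_Nil_conv)
  have "\<forall>w. adj T (last R) w \<longrightarrow> w \<in> set R"
  proof (intro allI impI, rule ccontr)
    fix w assume w: "adj T (last R) w" "w \<notin> set R"
    show False
    proof (cases "w \<in> set P")
      case True
      then show False using path_cannot_return[OF P R] w by (auto simp: R_def)
    next
      case False
      have "last R = last R'" using \<open>R' \<noteq> []\<close> by (simp add: R_def)
      then have "F (R' @ [w])"
        using R' w False graph_adj_verts[OF graph w(1)] \<open>R' \<noteq> []\<close>
        unfolding F_def is_path_def R_def by (auto simp: is_walk_append)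
      then show False using longest by fastforce
    qed
  qed
  then have "leaf T (last R)" using leaf_last_if_neighbours_on_path R by blast
  moreover have "last R \<notin> set P" using R' \<open>R' \<noteq> []\<close> last_in_set unfolding R_def F_def by auto
  ultimately show ?thesis by blast
qed

lemma three_leaves:
  assumes fin: "finite (verts T)" and c: "connected T" and not_path: "\<not> path_graph T"
  shows "\<exists>a b c. leaf T a \<and> leaf T b \<and> leaf T c \<and> a \<noteq> b \<and> a \<noteq> c \<and> b \<noteq> c"
proof -
  have "verts T \<noteq> {}" using c by (simp add: connected_def)
  then obtain v where "v \<in> verts T" by blast
  then have "is_path T [v]" by (simp add: is_path_def)
  moreover have "\<forall>Q. is_path T Q \<longrightarrow> length Q < Suc (card (verts T))"
    using is_path_length_le[OF fin] by (simp add: le_imp_less_Suc)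
  ultimately obtain P where P: "is_path T P" and longest: "\<forall>Q. is_path T Q \<longrightarrow> length Q \<le> length P"
    using ex_has_greatest_nat[of "is_path T" "[v]" length] by blast
  have "P \<noteq> []" using P unfolding is_path_def is_walk_def by blast
  have "set P \<subseteq> verts T" using P unfolding is_path_def is_walk_def by simp
  moreover have "set P \<noteq> verts T" using path_graph_if_spanning_path[OF P] not_path by blast
  ultimately obtain x where x: "x \<in> verts T" "x \<notin> set P" by blast
  have "hd P \<in> set P" using \<open>P \<noteq> []\<close> by simp
  then obtain xs where xs: "is_walk T xs" "hd xs = x" "last xs = hd P"
    using c x(1) \<open>set P \<subseteq> verts T\<close> unfolding connected_def by blast
  then obtain y p where yp: "y \<notin> set P" "p \<in> set P" "adj T y p"
    using walk_crosses[OF xs(1), of "set P"] x(2) \<open>hd P \<in> set P\<close> by auto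
  have "is_path T [p, y]"
    using yp graph_adj_verts[OF graph yp(3)] graph_adj_sym[OF graph yp(3)]
    unfolding is_path_def by (auto simp: is_walk_Cons_Cons)
  then have two: "2 \<le> length P" using longest by fastforce
  have "hd P \<noteq> last P"
    using P two \<open>P \<noteq> []\<close> by (auto simp: is_path_def hd_conv_nth last_conv_nth nth_eq_iff_index_eq)
  moreover obtain l where "leaf T l" "l \<notin> set P"
    using leaf_outside_path[OF fin P yp(1,2) graph_adj_sym[OF graph yp(3)]] by blast
  moreover have "hd P \<in> set P" "last P \<in> set P" using \<open>P \<noteq> []\<close> by auto
  ultimately show ?thesis using longest_path_ends_are_leaves[OF P longest two]
    by (intro exI[of _ "hd P"] exI[of _ "last P"] exI[of _ l]) auto
qed

end

lemma tree_cherry_centres: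
  assumes t: "tree T" and not_path: "\<not> path_graph T"
  shows "\<forall>h\<in>verts T. \<exists>a b c. a \<noteq> h \<and> mmd_cherry T a b c"
proof
  fix h assume "h \<in> verts T"
  have g: "graph T" and c: "connected T" and "\<not> has_cycle T" using t unfolding tree_def by auto
  then interpret acyclic_graph T by unfold_locales
  interpret connected_graph T using connected_graph_if_graph[OF g c] .
  obtain a b c where l: "leaf T a" "leaf T b" "leaf T c" "a \<noteq> b" "a \<noteq> c" "b \<noteq> c"
    using three_leaves[OF finite_verts c not_path] by blast
  then have "mmd_cherry T a b c" "mmd_cherry T b a c"
    using mmd_if_leaves unfolding mmd_cherry_def by auto
  show "\<exists>a b c. a \<noteq> h \<and> mmd_cherry T a b c"
  proof (cases "h = a")
    case True
    then show ?thesis using l(4) \<open>mmd_cherry T b a c\<close> by (intro exI[of _ b] exI[of _ a] exI[of _ c]) auto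
  next
    case False
    then show ?thesis using \<open>mmd_cherry T a b c\<close> by (intro exI[of _ a] exI[of _ b] exI[of _ c]) auto
  qed
qed

section \<open>The strong resolving graph and the main theorem\<close>

lemma MMD_iff_mmd: "graph G \<Longrightarrow> MMD G u v \<longleftrightarrow> mmd G u v"
  unfolding MMD_def mmd_def maximally_distant_def md_def graph_def by blast

lemma (in connected_graph) exists_mmd:
  assumes "2 \<le> card (verts G)"
  shows "\<exists>a b. mmd G a b"
proof -
  obtain x y where xy: "x \<in> verts G" "y \<in> verts G" "x \<noteq> y"
    using assms by (metis card_le_Suc0_iff_eq not_less_eq_eq numeral_2_eq_2 finite_verts)
  then obtain u v where "mmd G u v" "on_geodesic G x y u" "on_geodesic G y x v"
    using mmd_through by blast
  then show ?thesis by blast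
qed

lemma strong_resolving_graph_neighbours:
  "graph G \<Longrightarrow> x \<in> verts (strong_resolving_graph G) \<Longrightarrow>
    {y \<in> verts (strong_resolving_graph G). adj (strong_resolving_graph G) x y} = {y. mmd G x y}"
  by (auto simp: strong_resolving_graph_def verts_def adj_def MMD_iff_mmd mmd_def)

lemma mmd_unique_if_max_degree_one:
  assumes g: "graph G" and deg: "max_degree (strong_resolving_graph G) = 1"
  shows "\<forall>a b c. mmd G a b \<and> mmd G a c \<longrightarrow> b = c"
proof (intro allI impI)
  fix a b c assume abc: "mmd G a b \<and> mmd G a c"
  let ?S = "strong_resolving_graph G"
  have fin: "finite (verts ?S)" using g by (simp add: graph_def strong_resolving_graph_def verts_def)
  have a: "a \<in> verts ?S" using abc g by (auto simp: strong_resolving_graph_def verts_def MMD_iff_mmd mmd_def)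
  have "card {y. mmd G a y} \<le> max_degree ?S"
    using fin a strong_resolving_graph_neighbours[OF g a] unfolding max_degree_def
    by (metis (no_types, lifting) Max_ge finite_imageI image_eqI)
  moreover have "finite {y. mmd G a y}"
    using fin strong_resolving_graph_neighbours[OF g a] by (metis (no_types, lifting) finite_subset mem_Collect_eq subsetI)
  ultimately show "b = c" using abc deg card_le_Suc0_iff_eq[of "{y. mmd G a y}"] by auto
qed

lemma mmd_cherry_if_max_degree_two:
  assumes g: "graph G" and ne: "\<exists>a b. mmd G a b"
    and deg: "2 \<le> max_degree (strong_resolving_graph G)"
  shows "\<exists>a b c. mmd_cherry G a b c"
proof -
  let ?S = "strong_resolving_graph G"
  have fin: "finite (verts ?S)" using g by (simp add: graph_def strong_resolving_graph_def verts_def)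
  have "verts ?S \<noteq> {}" using ne g by (auto simp: strong_resolving_graph_def verts_def MMD_iff_mmd mmd_def)
  then have "max_degree ?S \<in> (\<lambda>x. card {y \<in> verts ?S. adj ?S x y}) ` verts ?S"
    unfolding max_degree_def using fin by (intro Max_in) auto
  then obtain a where a: "a \<in> verts ?S" "2 \<le> card {y. mmd G a y}"
    using deg strong_resolving_graph_neighbours[OF g] by auto
  then obtain b c where "b \<noteq> c" "mmd G a b" "mmd G a c"
    using card_le_Suc0_iff_eq[of "{y. mmd G a y}"] by (force dest: card_ge_0_finite)
  then show ?thesis unfolding mmd_cherry_def by blast
qed

lemma connected_graph_pairI: "connected_graph G \<Longrightarrow> connected_graph H \<Longrightarrow> connected_graph_pair G H"
  by (simp add: connected_graph_pair_def)

lemma O_SR_cart_prod_complete: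
  assumes G: "connected_graph G" "2 \<le> card (verts G)" and n: "3 \<le> n"
  shows "O_SR (G \<box> K n) = Obreaker"
proof -
  obtain u u' where u: "mmd G u u'" using connected_graph.exists_mmd G by blast
  have "connected_graph_pair G (K n)" using G connected_graph_K n by (simp add: connected_graph_pairI)
  from connected_graph_pair.O_SR_cart_prod_Obreaker_centres[OF this u K_cherry_centres[OF n]]
  show ?thesis .
qed

lemma O_SR_cart_prod_odd_cycle:
  assumes G: "connected_graph G" "2 \<le> card (verts G)" and k: "1 \<le> k"
  shows "O_SR (G \<box> C (2 * k + 1)) = Obreaker"
proof -
  obtain u u' where u: "mmd G u u'" using connected_graph.exists_mmd G by blast
  have "connected_graph_pair G (C (2 * k + 1))"
    using G connected_graph_C k by (simp add: connected_graph_pairI)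
  from connected_graph_pair.O_SR_cart_prod_Obreaker_centres[OF this u C_odd_cherry_centres[OF k]]
  show ?thesis .
qed

lemma O_SR_cart_prod_even_cycle_Omaker:
  assumes "graph G" "connected G" "2 \<le> card (verts G)" and k: "2 \<le> k"
    and "max_degree (strong_resolving_graph G) = 1"
  shows "O_SR (G \<box> C (2 * k)) = Omaker"
proof -
  have "connected_graph_pair G (C (2 * k))"
    using connected_graph_if_graph[OF assms(1,2)] connected_graph_C[of "2 * k"] k
    by (simp add: connected_graph_pairI)
  moreover have "2 \<le> card (verts (C (2 * k)))" using k by simp
  ultimately show ?thesis
    using connected_graph_pair.O_SR_cart_prod_Omaker assms(3) C_even_mmd_unique[OF k]
      mmd_unique_if_max_degree_one[OF assms(1,5)] by blast
qed

lemma O_SR_cart_prod_even_cycle_Obreaker: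
  assumes "graph G" "connected G" "2 \<le> card (verts G)" and k: "2 \<le> k"
    and "2 \<le> max_degree (strong_resolving_graph G)"
  shows "O_SR (G \<box> C (2 * k)) = Obreaker"
proof -
  have G: "connected_graph G" using connected_graph_if_graph assms(1,2) .
  then obtain g g1 g2 where g: "mmd_cherry G g g1 g2"
    using connected_graph.exists_mmd mmd_cherry_if_max_degree_two assms by metis
  have "connected_graph_pair G (C (2 * k))"
    using G connected_graph_C k by (simp add: connected_graph_pairI)
  from connected_graph_pair.O_SR_cart_prod_Obreaker_edges[OF this g C_even_mmd_avoiding[OF k]]
  show ?thesis .
qed

lemma O_SR_cart_prod_tree:
  assumes G: "connected_graph G" "2 \<le> card (verts G)" and T: "tree T" "\<not> path_graph T"
  shows "O_SR (G \<box> T) = Obreaker"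
proof -
  obtain u u' where u: "mmd G u u'" using connected_graph.exists_mmd G by blast
  have "connected_graph T" using connected_graph_if_graph[of T] T by (simp add: tree_def)
  then have "connected_graph_pair G T" using G by (simp add: connected_graph_pairI)
  from connected_graph_pair.O_SR_cart_prod_Obreaker_centres[OF this u tree_cherry_centres[OF T]]
  show ?thesis .
qed

theorem mainTheorem15:
  fixes G :: "'a graph"
  assumes "graph G" and "connected G" and "card (verts G) \<ge> 2"
  shows "(\<forall>n\<ge>3. O_SR (G \<box> K n) = Obreaker)
    \<and> (\<forall>n\<ge>3. (even n \<and> max_degree (strong_resolving_graph G) = 1 \<longrightarrow> O_SR (G \<box> C n) = Omaker)
            \<and> ((odd n \<or> max_degree (strong_resolving_graph G) \<ge> 2) \<longrightarrow> O_SR (G \<box> C n) = Obreaker))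
    \<and> (\<forall>T :: 'b graph. tree T \<and> \<not> path_graph T \<longrightarrow> O_SR (G \<box> T) = Obreaker)"
proof (intro conjI allI impI)
  have G: "connected_graph G" using connected_graph_if_graph assms(1,2) .
  fix n :: nat assume n: "3 \<le> n"
  show "O_SR (G \<box> K n) = Obreaker" using O_SR_cart_prod_complete G assms(3) n .
  show "O_SR (G \<box> C n) = Omaker" if "even n \<and> max_degree (strong_resolving_graph G) = 1"
    using that n O_SR_cart_prod_even_cycle_Omaker[OF assms] by (auto elim!: evenE)
  show "O_SR (G \<box> C n) = Obreaker" if "odd n \<or> max_degree (strong_resolving_graph G) \<ge> 2"
    using that n O_SR_cart_prod_even_cycle_Obreaker[OF assms] O_SR_cart_prod_odd_cycle[OF G assms(3)]
    by (cases "even n") (auto elim!: evenE oddE)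
next
  fix T :: "'b graph" assume "tree T \<and> \<not> path_graph T"
  then show "O_SR (G \<box> T) = Obreaker"
    using O_SR_cart_prod_tree connected_graph_if_graph assms by blast
qed

end
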